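(* Let $d\in\mathbb{N}$, $a\in\mathbb{R}$, $b\in(a,\infty)$. For every $v=(v_1,\dots,v_{d+1})\in\mathbb{R}^{d+1}$ let $I^v=\{x\in[a,b]^d\colon v_{d+1}+\sum_{i=1}^d v_ix_i>0\}$. Let $\lambda_d$ denote the Lebesgue measure on $\mathbb{R}^d$, let $p\colon[a,b]^d\to[0,\infty)$ be bounded and measurable, and let $u\in\mathbb{R}^{d+1}\setminus\{0\}$. Then there exist $\varepsilon,C\in(0,\infty)$ such that for all $v,w\in\mathbb{R}^{d+1}$ with $\max\{\|u-v\|,\|u-w\|\}\le\varepsilon$ it holds that $$\int_{I^v\,\Delta\, I^w}p(x)\,\lambda_d(\mathrm{d}x)\le C\|v-w\|,$$ where $\Delta$ denotes the symmetric difference of sets.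
   Context: $\|\cdot\|$ denotes the Euclidean norm. *)

theory Defs
  imports "HOL-Analysis.Analysis"
begin

definition cube :: "real \<Rightarrow> real \<Rightarrow> (real ^ 'n) set" where
  "cube a b = cbox (\<chi> i. a) (\<chi> i. b)"

text \<open>A vector v in R^(d+1) is represented as a pair (v_1..v_d, v_(d+1)).
  The norm on the product type is the Euclidean norm.
  I^v = {x in [a,b]^d. v_(d+1) + sum_i v_i x_i > 0}.\<close>
definition Iset :: "real \<Rightarrow> real \<Rightarrow> (real ^ 'n) \<times> real \<Rightarrow> (real ^ 'n) set" where
  "Iset a b v = {x \<in> cube a b. snd v + (\<Sum>i\<in>UNIV. fst v $ i * x $ i) > 0}"

definition symdiff :: "'a set \<Rightarrow> 'a set \<Rightarrow> 'a set" where
  "symdiff A B = (A - B) \<union> (B - A)"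

end

theory Submission imports Defs begin

text \<open>The affine forms of \<open>v\<close> and \<open>w\<close> differ by at most \<open>t = \<parallel>v - w\<parallel> (1 + R)\<close> on the cube,
  where \<open>R\<close> bounds the norms of its points, so \<open>I\<^sup>v \<Delta> I\<^sup>w\<close> lies in the slab of the cube where
  the form of \<open>v\<close> has modulus at most \<open>t\<close>. If some linear coefficient \<open>u\<^sub>j\<close> of \<open>u\<close> is nonzero,
  then \<open>\<bar>v\<^sub>j\<bar> \<ge> c = \<bar>u\<^sub>j\<bar>/2\<close> near \<open>u\<close>, and the slab has measure \<open>O(t/c)\<close>: about \<open>c/(3t)\<close>
  pairwise disjoint translates of it in direction \<open>e\<^sub>j\<close> fit into a cube of side \<open>b + 1 - a\<close>.
  If all linear coefficients of \<open>u\<close> vanish, its constant term does not, and \<open>I\<^sup>v = I\<^sup>u\<close> for all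
  \<open>v\<close> near \<open>u\<close>.\<close>

lemma Iset_inner: "Iset a b v = {x \<in> cube a b. snd v + inner (fst v) x > 0}"
  by (simp add: Iset_def inner_vec_def mult.commute)

lemma affine_form_diff_le:
  fixes v w :: "'a::real_inner \<times> real"
  assumes "norm x \<le> R"
  shows "\<bar>(snd v + inner (fst v) x) - (snd w + inner (fst w) x)\<bar> \<le> norm (v - w) * (1 + R)"
proof -
  have "(snd v + inner (fst v) x) - (snd w + inner (fst w) x) = snd (v - w) + inner (fst (v - w)) x"
    by (simp add: inner_diff_left)
  also have "\<bar>\<dots>\<bar> \<le> \<bar>snd (v - w)\<bar> + norm (fst (v - w)) * norm x"
    using Cauchy_Schwarz_ineq2[of "fst (v - w)" x] by linarith
  also have "\<dots> \<le> norm (v - w) + norm (v - w) * R"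
  proof -
    have "norm (fst (v - w)) \<le> norm (v - w)" "\<bar>snd (v - w)\<bar> \<le> norm (v - w)"
      by (metis norm_fst_le prod.collapse) (metis norm_snd_le prod.collapse real_norm_def)
    then show ?thesis
      using assms by (intro add_mono mult_mono) auto
  qed
  finally show ?thesis
    by (simp add: algebra_simps)
qed

lemma lmeasurable_slab:
  fixes v :: "'a::euclidean_space"
  assumes "compact K"
  shows "{x \<in> K. \<bar>v0 + inner v x\<bar> \<le> t} \<in> lmeasurable"
proof -
  have "closed {x. \<bar>v0 + inner v x\<bar> \<le> t}"
    by (rule closed_Collect_le) (auto intro!: continuous_intros)
  then have "compact (K \<inter> {x. \<bar>v0 + inner v x\<bar> \<le> t})"
    using assms by (rule compact_Int_closed[rotated])
  then show ?thesis
    by (simp add: Collect_conj_eq lmeasurable_compact)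
qed

lemma measure_le_of_disjoint_translates:
  fixes S B :: "'a::euclidean_space set"
  assumes S: "S \<in> lmeasurable" and B: "B \<in> lmeasurable" and "finite K"
    and disj: "disjoint_family_on (\<lambda>k. (+) (f k) ` S) K"
    and sub: "\<And>k. k \<in> K \<Longrightarrow> (+) (f k) ` S \<subseteq> B"
  shows "real (card K) * measure lebesgue S \<le> measure lebesgue B"
proof -
  have T: "(+) (f k) ` S \<in> lmeasurable" for k
    using S by (rule measurable_translation)
  have "real (card K) * measure lebesgue S = (\<Sum>k\<in>K. measure lebesgue ((+) (f k) ` S))"
    by (simp add: measure_translation)
  also have "\<dots> = measure lebesgue (\<Union>k\<in>K. (+) (f k) ` S)"
    using T disj \<open>finite K\<close> by (intro measure_UNION'[symmetric]) (auto simp: disjoint_family_on_def pairwise_def disjnt_def)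
  also have "\<dots> \<le> measure lebesgue B"
    using sub T B \<open>finite K\<close> by (intro measure_mono_fmeasurable) auto
  finally show ?thesis .
qed

text \<open>On the slab the form varies by at most \<open>2t\<close>, while each translation step by \<open>h e\<close> shifts it
  by \<open>h \<langle>v, e\<rangle>\<close>.\<close>
lemma disjoint_slab_translates:
  fixes v e :: "'a::real_inner"
  assumes "2 * t < h * \<bar>inner v e\<bar>"
  shows "disjoint_family (\<lambda>k::nat. (+) ((real k * h) *\<^sub>R e) ` {x \<in> X. \<bar>v0 + inner v x\<bar> \<le> t})"
  unfolding disjoint_family_on_def
proof (intro ballI impI)
  fix k l :: nat
  assume "k \<noteq> l"
  show "(+) ((real k * h) *\<^sub>R e) ` {x \<in> X. \<bar>v0 + inner v x\<bar> \<le> t} \<inter>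
        (+) ((real l * h) *\<^sub>R e) ` {x \<in> X. \<bar>v0 + inner v x\<bar> \<le> t} = {}"
    (is "?K \<inter> ?L = {}")
  proof (rule ccontr)
    assume "?K \<inter> ?L \<noteq> {}"
    then obtain x y where x: "\<bar>v0 + inner v x\<bar> \<le> t" and y: "\<bar>v0 + inner v y\<bar> \<le> t"
      and eq: "(real k * h) *\<^sub>R e + x = (real l * h) *\<^sub>R e + y"
      by auto
    have "inner v ((real k * h) *\<^sub>R e + x) = inner v ((real l * h) *\<^sub>R e + y)"
      using eq by simp
    then have "(real k - real l) * (h * inner v e) = (v0 + inner v y) - (v0 + inner v x)"
      by (simp add: inner_add_right algebra_simps)
    then have "\<bar>real k - real l\<bar> * (h * \<bar>inner v e\<bar>) \<le> 2 * t"
      using x y assms by (simp add: abs_mult)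
    moreover have "1 \<le> \<bar>real k - real l\<bar>"
      using \<open>k \<noteq> l\<close> by linarith
    moreover have "0 \<le> t"
      using x by linarith
    ultimately show False
      using assms mult_right_mono[of 1 "\<bar>real k - real l\<bar>" "h * \<bar>inner v e\<bar>"] by linarith
  qed
qed

lemma measure_slab_le:
  fixes v :: "real ^ 'n"
  assumes "a \<le> b" "0 < h" "2 * t < h * \<bar>v $ j\<bar>"
  shows "measure lebesgue {x \<in> cube a b. \<bar>v0 + inner v x\<bar> \<le> t} \<le> (b + 1 - a) ^ CARD('n) * h"
proof -
  define S where "S = {x \<in> cube a b. \<bar>v0 + inner v x\<bar> \<le> t}"
  define B :: "(real ^ 'n) set" where "B = cbox (\<chi> i. a) (\<chi> i. b + 1)"
  define N where "N = nat \<lfloor>1 / h\<rfloor>"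
  have shift: "(+) ((real k * h) *\<^sub>R axis j 1) ` S \<subseteq> B" if "k \<in> {..N}" for k
  proof -
    have "real k \<le> of_int \<lfloor>1 / h\<rfloor>"
      using that \<open>0 < h\<close> by (simp add: N_def le_nat_iff)
    also have "\<dots> \<le> 1 / h"
      by simp
    finally have "real k * h \<le> 1"
      using \<open>0 < h\<close> by (simp add: pos_le_divide_eq)
    moreover have "0 \<le> real k * h"
      using \<open>0 < h\<close> by simp
    ultimately have "x + (real k * h) *\<^sub>R axis j 1 \<in> B" if "x \<in> cube a b" for x
      using that by (auto simp: B_def cube_def mem_box_cart axis_def intro: add_increasing2 add_mono)
    then show ?thesis
      by (auto simp: S_def add.commute)
  qed
  have "real (card {..N}) * measure lebesgue S \<le> measure lebesgue B"
  proof (rule measure_le_of_disjoint_translates)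
    show "S \<in> lmeasurable"
      unfolding S_def cube_def by (intro lmeasurable_slab compact_cbox)
    show "disjoint_family_on (\<lambda>k. (+) ((real k * h) *\<^sub>R axis j 1) ` S) {..N}"
      using disjoint_slab_translates[of t h v "axis j 1"] assms(3)
      by (auto simp: S_def inner_axis disjoint_family_on_def)
  qed (use shift in \<open>auto simp: B_def\<close>)
  also have "measure lebesgue B = (b + 1 - a) ^ CARD('n)"
    using \<open>a \<le> b\<close> by (simp add: B_def content_cbox_cart mem_box_cart interval_ne_empty_cart)
  finally have packed: "(real N + 1) * measure lebesgue S \<le> (b + 1 - a) ^ CARD('n)"
    by (simp add: add.commute)
  have "1 \<le> (real N + 1) * h"
    using \<open>0 < h\<close> real_of_int_floor_add_one_gt[of "1 / h"]
    by (simp add: N_def field_simps)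
  then have "measure lebesgue S \<le> (real N + 1) * measure lebesgue S * h"
    using mult_right_mono[of 1 "(real N + 1) * h" "measure lebesgue S"] by (simp add: algebra_simps)
  also have "\<dots> \<le> (b + 1 - a) ^ CARD('n) * h"
    using packed \<open>0 < h\<close> by (simp add: mult_right_mono)
  finally show ?thesis
    by (simp add: S_def)
qed

lemma set_integral_le_bound_measure:
  fixes p :: "'a \<Rightarrow> real"
  assumes "A \<subseteq> S" "S \<in> fmeasurable M" "0 \<le> B" "\<And>x. x \<in> A \<Longrightarrow> p x \<le> B"
  shows "(LINT x : A | M. p x) \<le> B * measure M S"
proof (cases "integrable M (\<lambda>x. indicator A x *\<^sub>R p x)")
  case True
  have "(LINT x : A | M. p x) \<le> (LINT x | M. B * indicator S x)"
    unfolding set_lebesgue_integral_def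
  proof (rule integral_mono[OF True])
    show "integrable M (\<lambda>x. B * indicator S x)"
      using assms(2) by (intro integrable_mult_right integrable_real_indicator) (auto simp: fmeasurable_def)
    show "indicator A x *\<^sub>R p x \<le> B * indicator S x" for x
      using assms by (auto simp: indicator_def)
  qed
  also have "\<dots> = B * measure M S"
    using assms(2) by (simp add: fmeasurable_def)
  finally show ?thesis .
next
  case False
  then show ?thesis
    using assms(2,3) by (simp add: set_lebesgue_integral_def not_integrable_integral_eq)
qed

lemma symdiff_Iset_subset_slab:
  fixes v w :: "(real ^ 'n) \<times> real"
  assumes "\<And>x :: real ^ 'n. x \<in> cube a b \<Longrightarrow> norm x \<le> R"
  shows "symdiff (Iset a b v) (Iset a b w) \<subseteq>
    {x \<in> cube a b. \<bar>snd v + inner (fst v) x\<bar> \<le> norm (v - w) * (1 + R)}"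
proof
  fix x
  assume x: "x \<in> symdiff (Iset a b v) (Iset a b w)"
  then have "x \<in> cube a b"
    by (auto simp: symdiff_def Iset_def)
  then have "\<bar>(snd v + inner (fst v) x) - (snd w + inner (fst w) x)\<bar> \<le> norm (v - w) * (1 + R)"
    using assms by (intro affine_form_diff_le) blast
  then show "x \<in> {x \<in> cube a b. \<bar>snd v + inner (fst v) x\<bar> \<le> norm (v - w) * (1 + R)}"
    using x \<open>x \<in> cube a b\<close> by (auto simp: symdiff_def Iset_inner)
qed

lemma set_integral_symdiff_Iset_le:
  fixes v w :: "(real ^ 'n) \<times> real"
  assumes "a \<le> b" "0 \<le> M" "\<And>x. x \<in> cube a b \<Longrightarrow> p x \<le> M"
    and "0 \<le> R" "\<And>x :: real ^ 'n. x \<in> cube a b \<Longrightarrow> norm x \<le> R"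
    and "0 < c" "c \<le> \<bar>fst v $ j\<bar>"
  shows "(LINT x : symdiff (Iset a b v) (Iset a b w) | lebesgue. p x)
    \<le> M * (b + 1 - a) ^ CARD('n) * (3 * (1 + R) / c) * norm (v - w)"
proof (cases "v = w")
  case True
  then show ?thesis
    by (simp add: symdiff_def set_lebesgue_integral_def)
next
  case False
  define t where "t = norm (v - w) * (1 + R)"
  have "0 < t"
    using False \<open>0 \<le> R\<close> by (simp add: t_def)
  have "2 * t < 3 * t / c * \<bar>fst v $ j\<bar>"
    using \<open>0 < t\<close> \<open>0 < c\<close> mult_left_mono[OF assms(7), of "3 * t / c"] by simp
  then have "measure lebesgue {x \<in> cube a b. \<bar>snd v + inner (fst v) x\<bar> \<le> t}
      \<le> (b + 1 - a) ^ CARD('n) * (3 * t / c)"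
    using \<open>a \<le> b\<close> \<open>0 < t\<close> \<open>0 < c\<close> by (intro measure_slab_le) auto
  moreover have "(LINT x : symdiff (Iset a b v) (Iset a b w) | lebesgue. p x)
      \<le> M * measure lebesgue {x \<in> cube a b. \<bar>snd v + inner (fst v) x\<bar> \<le> t}"
  proof (rule set_integral_le_bound_measure)
    show "symdiff (Iset a b v) (Iset a b w) \<subseteq> {x \<in> cube a b. \<bar>snd v + inner (fst v) x\<bar> \<le> t}"
      unfolding t_def using assms(5) by (rule symdiff_Iset_subset_slab)
    show "{x \<in> cube a b. \<bar>snd v + inner (fst v) x\<bar> \<le> t} \<in> lmeasurable"
      unfolding cube_def by (intro lmeasurable_slab compact_cbox)
  qed (use assms(2,3) in \<open>auto simp: symdiff_def Iset_def\<close>)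
  ultimately have "(LINT x : symdiff (Iset a b v) (Iset a b w) | lebesgue. p x)
      \<le> M * ((b + 1 - a) ^ CARD('n) * (3 * t / c))"
    using \<open>0 \<le> M\<close> by (meson mult_left_mono order_trans)
  then show ?thesis
    by (simp add: t_def field_simps)
qed

lemma norm_le_on_cube:
  fixes a b :: real
  obtains R where "0 < R" "\<And>x :: real ^ 'n. x \<in> cube a b \<Longrightarrow> norm x \<le> R"
  using bounded_cbox[of "\<chi> i. a" "\<chi> i. b"] that by (auto simp: cube_def bounded_pos)

lemma Iset_locally_constant:
  fixes u :: "(real ^ 'n) \<times> real"
  assumes "fst u = 0" "snd u \<noteq> 0"
  obtains \<epsilon> where "0 < \<epsilon>" "\<And>v. norm (u - v) \<le> \<epsilon> \<Longrightarrow> Iset a b v = Iset a b u"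
proof -
  obtain R where R: "0 < R" "\<And>x :: real ^ 'n. x \<in> cube a b \<Longrightarrow> norm x \<le> R"
    using norm_le_on_cube[where a = a and b = b] by blast
  define \<epsilon> where "\<epsilon> = \<bar>snd u\<bar> / (2 * (1 + R))"
  have "0 < \<epsilon>" "\<epsilon> * (1 + R) < \<bar>snd u\<bar>"
    using assms(2) \<open>0 < R\<close> by (simp_all add: \<epsilon>_def field_simps add_pos_nonneg)
  have "Iset a b v = Iset a b u" if v: "norm (u - v) \<le> \<epsilon>" for v
  proof -
    have "snd v + inner (fst v) x > 0 \<longleftrightarrow> snd u > 0" if "x \<in> cube a b" for x
    proof -
      have "\<bar>snd u - (snd v + inner (fst v) x)\<bar> \<le> norm (u - v) * (1 + R)"
        using affine_form_diff_le[OF R(2)[OF that], of u v] assms(1) by simp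
      also have "\<dots> \<le> \<epsilon> * (1 + R)"
        using v \<open>0 < R\<close> by (intro mult_right_mono) auto
      finally show ?thesis
        using \<open>\<epsilon> * (1 + R) < \<bar>snd u\<bar>\<close> by linarith
    qed
    then show ?thesis
      using assms(1) by (auto simp: Iset_inner)
  qed
  with \<open>0 < \<epsilon>\<close> show ?thesis
    using that by blast
qed

lemma set_integral_symdiff_Iset_locally_lipschitz:
  fixes u :: "(real ^ 'n) \<times> real"
  assumes "a \<le> b" "fst u $ j \<noteq> 0" "0 < M" "\<And>x. x \<in> cube a b \<Longrightarrow> p x \<le> M"
  obtains \<epsilon> C where "0 < \<epsilon>" "0 < C"
    "\<And>v w. norm (u - v) \<le> \<epsilon> \<Longrightarrow>
      (LINT x : symdiff (Iset a b v) (Iset a b w) | lebesgue. p x) \<le> C * norm (v - w)"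
proof -
  obtain R where R: "0 < R" "\<And>x :: real ^ 'n. x \<in> cube a b \<Longrightarrow> norm x \<le> R"
    using norm_le_on_cube[where a = a and b = b] by blast
  define c where "c = \<bar>fst u $ j\<bar> / 2"
  have c: "c \<le> \<bar>fst v $ j\<bar>" if "norm (u - v) \<le> c" for v
  proof -
    have "\<bar>fst u $ j - fst v $ j\<bar> \<le> norm (fst (u - v))"
      using component_le_norm_cart[of "fst (u - v)" j] by simp
    also have "\<dots> \<le> norm (u - v)"
      by (metis norm_fst_le prod.collapse)
    finally show ?thesis
      using that by (simp add: c_def)
  qed
  have "0 < c" "0 < M * (b + 1 - a) ^ CARD('n) * (3 * (1 + R) / c)"
    using assms(1-3) R(1) by (simp_all add: c_def)
  then show ?thesis
    using that[of c "M * (b + 1 - a) ^ CARD('n) * (3 * (1 + R) / c)"]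
      set_integral_symdiff_Iset_le[OF assms(1) _ assms(4) _ R(2) _ c] R(1) assms(3)
    by (simp add: less_imp_le)
qed

theorem lemma2p4:
  fixes a b :: real and p :: "real ^ 'n \<Rightarrow> real" and u :: "(real ^ 'n) \<times> real"
  assumes "a < b"
    and "p \<in> borel_measurable (lebesgue_on (cube a b))"
    and "\<And>x. x \<in> cube a b \<Longrightarrow> p x \<ge> 0"
    and "\<exists>M. \<forall>x \<in> cube a b. p x \<le> M"
    and "u \<noteq> 0"
  shows "\<exists>\<epsilon> C. \<epsilon> > 0 \<and> C > 0 \<and>
    (\<forall>v w. max (norm (u - v)) (norm (u - w)) \<le> \<epsilon> \<longrightarrow>
      (LINT x : symdiff (Iset a b v) (Iset a b w) | lebesgue. p x) \<le> C * norm (v - w))"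
proof -
  from assms(4) obtain M0 where "\<forall>x \<in> cube a b. p x \<le> M0"
    by blast
  then have M: "0 < max M0 1" "\<And>x. x \<in> cube a b \<Longrightarrow> p x \<le> max M0 1"
    by (auto simp: le_max_iff_disj)
  show ?thesis
  proof (cases "fst u = 0")
    case True
    with assms(5) have "snd u \<noteq> 0"
      by (simp add: prod_eq_iff)
    with True obtain \<epsilon> where "0 < \<epsilon>" and const: "\<And>v. norm (u - v) \<le> \<epsilon> \<Longrightarrow> Iset a b v = Iset a b u"
      using Iset_locally_constant[where a = a and b = b] by blast
    have "symdiff (Iset a b v) (Iset a b w) = {}" if "max (norm (u - v)) (norm (u - w)) \<le> \<epsilon>" for v w
      using that const[of v] const[of w] by (simp add: symdiff_def)
    with \<open>0 < \<epsilon>\<close> show ?thesis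
      by (intro exI[of _ \<epsilon>] exI[of _ 1]) (simp add: set_lebesgue_integral_def)
  next
    case False
    then obtain j where "fst u $ j \<noteq> 0"
      by (metis vec_eq_iff zero_index)
    with \<open>a < b\<close> M obtain \<epsilon> C where "0 < \<epsilon>" "0 < C"
      and "\<And>v w. norm (u - v) \<le> \<epsilon> \<Longrightarrow>
        (LINT x : symdiff (Iset a b v) (Iset a b w) | lebesgue. p x) \<le> C * norm (v - w)"
      by (metis less_imp_le set_integral_symdiff_Iset_locally_lipschitz)
    then show ?thesis
      by (intro exI[of _ \<epsilon>] exI[of _ C]) auto
  qed
qed

end
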